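(* Let $\lambda>0$, $d_v>0$, $\epsilon\ge0$, $m=\lambda\pi d_v^2$, $k\ge0$, and let $r_1,\dots,r_k\ge0$ be given ranges (the observed ranges $r_i=\|\tilde{\mathbf x}_i\|_2$ at $\mathbf x$), with $f(\mathbf x)$ the set of all orderings of $(r_1,\dots,r_k)$. Put $A_i=\{\mathbf y\in\mathbb R^2:\ |\|\mathbf y\|_2-r_i|\le\epsilon\}$, i.e. $\mathbf b(\mathbf 0,r_i+\epsilon)\setminus\mathbf b(\mathbf 0,r_i-\epsilon)$. Then $$\mathbb P\big[\Delta_s(f(\mathbf x),F(\mathbf 0))\le\epsilon\big]=\frac{m^k}{k!}e^{-m}\cdot\mathbb P\big[\exists\text{ an ordering }(\tilde{\mathbf X}_1,\dots,\tilde{\mathbf X}_k)\text{ of the visible landmarks at }\mathbf 0\text{ with }\tilde{\mathbf X}_i\in A_i\ \forall i\ \big|\ N_{\mathbf 0}=k\big],$$ i.e. $\frac{m^k}{k!}e^{-m}\,\mathbb E\big[\bigvee_{\mathbf R_0\in F(\mathbf 0)}\prod_{i=1}^k\mathbf 1(\tilde{\mathbf X}_i\in A_i)\,\big|\,N_{\mathbf 0}=k\big]$, where $\mathbf R_0=(\|\tilde{\mathbf X}_1\|_2,\dots,\|\tilde{\mathbf X}_k\|_2)$ and $\bigvee$ is logical OR.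
   Context: Landmarks seen from the origin are the points of a homogeneous Poisson point process $\Phi_{\mathbf 0}$ of intensity $\lambda$ on $\mathbb R^2$; a landmark is visible from $\mathbf 0$ if its distance to $\mathbf 0$ is at most $d_v$, and $N_{\mathbf 0}$ is the number of visible landmarks. The random measurement $F(\mathbf 0)$ is the set of all vectors in $\mathbb R^{N_{\mathbf 0}}$ obtained by listing, in some order, the distances from $\mathbf 0$ to the visible landmarks. For vectors, $\Delta_v(\mathbf u,\mathbf w)=\|\mathbf u-\mathbf w\|_\infty$ if they have the same dimension (equal to $0$ if both are empty) and $\infty$ otherwise; for sets of vectors, $\Delta_s(f,F)=\min_{\mathbf u\in f,\mathbf w\in F}\Delta_v(\mathbf u,\mathbf w)$. $\mathbf b(\mathbf c,\rho)$ denotes the Euclidean ball of radius $\rho$ centred at $\mathbf c$ (empty if $\rho<0$). *)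

theory Defs
  imports "HOL-Analysis.Analysis" "HOL-Probability.Probability"
begin

text \<open>Poisson point process of intensity lam on the plane, restricted to the visibility
disk cball 0 dv (only visible landmarks matter).  Standard construction: the number of
points N is Poisson with mean lam * pi * dv^2, and the points are the first N terms of an
i.i.d. sequence of uniform points on the disk.\<close>

definition visible_pp :: "real \<Rightarrow> real \<Rightarrow> (nat \<times> (nat \<Rightarrow> real^2)) measure" where
  "visible_pp lam dv =
     measure_pmf (poisson_pmf (lam * pi * dv\<^sup>2)) \<Otimes>\<^sub>M
     (\<Pi>\<^sub>M i\<in>(UNIV::nat set). uniform_measure lborel (cball (0::real^2) dv))"

definition N0 :: "nat \<times> (nat \<Rightarrow> real^2) \<Rightarrow> nat" where
  "N0 \<omega> = fst \<omega>"

definition landmark :: "nat \<times> (nat \<Rightarrow> real^2) \<Rightarrow> nat \<Rightarrow> real^2" where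
  "landmark \<omega> i = snd \<omega> i"

definition meas_F :: "nat \<times> (nat \<Rightarrow> real^2) \<Rightarrow> real list set" where
  "meas_F \<omega> = {map (\<lambda>i. dist 0 (landmark \<omega> (\<sigma> i))) [0..<N0 \<omega>] | \<sigma>. \<sigma> permutes {..<N0 \<omega>}}"

definition orderings :: "real list \<Rightarrow> real list set" where
  "orderings r = {map (\<lambda>i. r ! (\<sigma> i)) [0..<length r] | \<sigma>. \<sigma> permutes {..<length r}}"

definition Delta_v :: "real list \<Rightarrow> real list \<Rightarrow> ereal" where
  "Delta_v u w =
     (if length u = length w
      then ereal (if u = [] then 0 else Max {\<bar>u ! i - w ! i\<bar> | i. i < length u})
      else \<infinity>)"

definition Delta_s :: "real list set \<Rightarrow> real list set \<Rightarrow> ereal" where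
  "Delta_s f F = (INF u\<in>f. INF w\<in>F. Delta_v u w)"

end

theory Submission
  imports Defs
begin

text \<open>Because \<open>Delta_v\<close> is infinite between vectors of different lengths, the event
  \<open>Delta_s (f x) (F 0) \<le> \<epsilon>\<close> forces \<open>N\<^sub>0 = k\<close>.  An ordering \<open>g \<circ> \<sigma>\<close> of the ranges and an
  ordering \<open>h \<circ> \<tau>\<close> of the landmark distances are compared entrywise exactly as \<open>g\<close> and
  \<open>h \<circ> (\<tau> \<circ> inv \<sigma>)\<close>, so the event is \<open>N\<^sub>0 = k\<close> together with some labelling of the landmarks
  that puts the \<open>i\<close>-th one into the annulus \<open>A i\<close>.  Its probability is therefore
  \<open>\<P>(N\<^sub>0 = k)\<close>, a Poisson weight of mean \<open>\<lambda> \<pi> d\<^sub>v\<^sup>2\<close>, times the conditional probability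
  given \<open>N\<^sub>0 = k\<close>.\<close>

definition permuted_lists :: "nat \<Rightarrow> (nat \<Rightarrow> 'a) \<Rightarrow> 'a list set" where
  "permuted_lists n g = {map (\<lambda>i. g (\<sigma> i)) [0..<n] | \<sigma>. \<sigma> permutes {..<n}}"

lemma orderings_eq_permuted_lists: "orderings r = permuted_lists (length r) ((!) r)"
  by (simp add: orderings_def permuted_lists_def)

lemma meas_F_eq_permuted_lists:
  "meas_F \<omega> = permuted_lists (N0 \<omega>) (\<lambda>i. norm (landmark \<omega> i))"
  by (simp add: meas_F_def permuted_lists_def dist_0_norm)

lemma permuted_lists_eq_image:
  "permuted_lists n g = (\<lambda>\<sigma>. map (\<lambda>i. g (\<sigma> i)) [0..<n]) ` {\<sigma>. \<sigma> permutes {..<n}}"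
  unfolding permuted_lists_def by auto

lemma finite_permuted_lists: "finite (permuted_lists n g)"
  by (simp add: permuted_lists_eq_image finite_permutations)

lemma permuted_lists_nonempty: "permuted_lists n g \<noteq> {}"
proof -
  have "map (\<lambda>i. g (id i)) [0..<n] \<in> permuted_lists n g"
    unfolding permuted_lists_def using permutes_id by blast
  then show ?thesis
    by blast
qed

lemma Delta_s_le_iff:
  assumes "finite f" "f \<noteq> {}" "finite F" "F \<noteq> {}"
  shows "Delta_s f F \<le> e \<longleftrightarrow> (\<exists>u\<in>f. \<exists>w\<in>F. Delta_v u w \<le> e)"
proof -
  have "Delta_s f F = Min ((\<lambda>u. Min (Delta_v u ` F)) ` f)"
    using assms by (simp add: Delta_s_def Min_Inf)
  then show ?thesis
    using assms by (simp add: Min_le_iff)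
qed

lemma Delta_v_le_iff:
  assumes "length u = length w" "0 \<le> e"
  shows "Delta_v u w \<le> ereal e \<longleftrightarrow> (\<forall>i<length u. \<bar>u ! i - w ! i\<bar> \<le> e)"
proof (cases "u = []")
  case False
  then have "{\<bar>u ! i - w ! i\<bar> | i. i < length u} \<noteq> {}"
    by auto
  with False assms(1) show ?thesis
    by (auto simp: Delta_v_def Max_le_iff)
qed (use assms in \<open>simp add: Delta_v_def\<close>)

lemma Delta_v_different_lengths: "length u \<noteq> length w \<Longrightarrow> Delta_v u w = \<infinity>"
  by (simp add: Delta_v_def)

lemma Delta_s_permuted_lists_le_iff:
  assumes "0 \<le> e"
  shows "Delta_s (permuted_lists n g) (permuted_lists n' h) \<le> ereal e \<longleftrightarrow>
    n' = n \<and> (\<exists>\<pi>. \<pi> permutes {..<n} \<and> (\<forall>i<n. \<bar>h (\<pi> i) - g i\<bar> \<le> e))"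
  (is "?L \<longleftrightarrow> ?R")
proof
  assume ?L
  then obtain u w where "u \<in> permuted_lists n g" "w \<in> permuted_lists n' h"
    and "Delta_v u w \<le> ereal e"
    by (auto simp: Delta_s_le_iff finite_permuted_lists permuted_lists_nonempty)
  then obtain \<sigma> \<tau> where \<sigma>: "\<sigma> permutes {..<n}" and \<tau>: "\<tau> permutes {..<n'}"
    and le: "Delta_v (map (\<lambda>i. g (\<sigma> i)) [0..<n]) (map (\<lambda>i. h (\<tau> i)) [0..<n']) \<le> ereal e"
    unfolding permuted_lists_def by blast
  have "n' = n"
  proof (rule ccontr)
    assume "n' \<noteq> n"
    with le show False
      by (simp add: Delta_v_different_lengths)
  qed
  with le assms have close: "\<forall>j<n. \<bar>g (\<sigma> j) - h (\<tau> j)\<bar> \<le> e"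
    by (simp add: Delta_v_le_iff)
  have "\<bar>h ((\<tau> \<circ> inv \<sigma>) i) - g i\<bar> \<le> e" if "i < n" for i
  proof -
    have "inv \<sigma> i < n" and "\<sigma> (inv \<sigma> i) = i"
      using \<sigma> that permutes_inv permutes_in_image permutes_inverses(1) by fastforce+
    with close show ?thesis
      by (metis abs_minus_commute comp_apply)
  qed
  moreover have "\<tau> \<circ> inv \<sigma> permutes {..<n}"
    using \<sigma> \<tau> \<open>n' = n\<close> by (simp add: permutes_compose permutes_inv)
  ultimately show ?R
    using \<open>n' = n\<close> by blast
next
  assume ?R
  then obtain \<pi> where "n' = n" and \<pi>: "\<pi> permutes {..<n}"
    and close: "\<forall>i<n. \<bar>h (\<pi> i) - g i\<bar> \<le> e"
    by blast
  have "map (\<lambda>i. g (id i)) [0..<n] \<in> permuted_lists n g"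
    using permutes_id unfolding permuted_lists_def by blast
  moreover have "map (\<lambda>i. h (\<pi> i)) [0..<n] \<in> permuted_lists n' h"
    using \<pi> \<open>n' = n\<close> unfolding permuted_lists_def by blast
  moreover have "Delta_v (map (\<lambda>i. g (id i)) [0..<n]) (map (\<lambda>i. h (\<pi> i)) [0..<n]) \<le> ereal e"
    using close assms by (simp add: Delta_v_le_iff abs_minus_commute)
  ultimately show ?L
    by (auto simp: Delta_s_le_iff finite_permuted_lists permuted_lists_nonempty)
qed

lemma prob_space_uniform_cball:
  fixes c :: "'a::euclidean_space"
  assumes "0 < \<rho>"
  shows "prob_space (uniform_measure lborel (cball c \<rho>))"
proof (rule prob_space_uniform_measure)
  show "emeasure lborel (cball c \<rho>) \<noteq> 0"
    using assms by (metis content_cball_gt_0_iff emeasure_lborel_cball_finite measure_def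
        enn2real_0 less_irrefl)
  show "emeasure lborel (cball c \<rho>) \<noteq> \<infinity>"
    using emeasure_lborel_cball_finite[of c \<rho>] by simp
qed

lemma prob_pair_pmf_fst_eq:
  assumes "prob_space M"
  shows "measure (measure_pmf p \<Otimes>\<^sub>M M) {\<omega> \<in> space (measure_pmf p \<Otimes>\<^sub>M M). fst \<omega> = k}
    = pmf p k"
proof -
  interpret M: prob_space M by (rule assms)
  have "{\<omega> \<in> space (measure_pmf p \<Otimes>\<^sub>M M). fst \<omega> = k} = {k} \<times> space M"
    by (auto simp: space_pair_measure)
  then have "measure (measure_pmf p \<Otimes>\<^sub>M M) {\<omega> \<in> space (measure_pmf p \<Otimes>\<^sub>M M). fst \<omega> = k}
      = measure (measure_pmf p) {k} * measure M (space M)"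
    by (simp add: measure_def M.emeasure_pair_measure_Times enn2real_mult)
  then show ?thesis
    by (simp add: measure_pmf_single M.prob_space)
qed

lemma prob_N0_eq_poisson:
  assumes "0 < lam" "0 < dv"
  shows "\<P>(\<omega> in visible_pp lam dv. N0 \<omega> = k)
    = (lam * pi * dv\<^sup>2) ^ k / fact k * exp (- (lam * pi * dv\<^sup>2))"
proof -
  have "prob_space (\<Pi>\<^sub>M i\<in>(UNIV::nat set). uniform_measure lborel (cball (0::real^2) dv))"
    using prob_space_uniform_cball[OF assms(2)] by (auto intro: prob_space_PiM)
  moreover have "0 < lam * pi * dv\<^sup>2"
    using assms by simp
  ultimately show ?thesis
    by (simp add: visible_pp_def N0_def prob_pair_pmf_fst_eq)
qed

theorem lemma9:
  fixes lam dv eps :: real and k :: nat and r :: "real list"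
    and m :: real and A :: "nat \<Rightarrow> (real^2) set"
  assumes "lam > 0" and "dv > 0" and "eps \<ge> 0"
    and "length r = k" and "\<forall>i<k. r ! i \<ge> 0"
  defines "m \<equiv> lam * pi * dv\<^sup>2"
    and "A \<equiv> (\<lambda>i. {y. \<bar>norm y - r ! i\<bar> \<le> eps})"
  shows "\<P>(\<omega> in visible_pp lam dv. Delta_s (orderings r) (meas_F \<omega>) \<le> ereal eps)
       = m ^ k / fact k * exp (- m) *
         \<P>(\<omega> in visible_pp lam dv.
              (\<exists>\<sigma>. \<sigma> permutes {..<N0 \<omega>} \<and> (\<forall>i<k. landmark \<omega> (\<sigma> i) \<in> A i))
            \<bar> N0 \<omega> = k)"
proof -
  have event: "Delta_s (orderings r) (meas_F \<omega>) \<le> ereal eps \<longleftrightarrow>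
      (\<exists>\<sigma>. \<sigma> permutes {..<N0 \<omega>} \<and> (\<forall>i<k. landmark \<omega> (\<sigma> i) \<in> A i)) \<and> N0 \<omega> = k" for \<omega>
    using Delta_s_permuted_lists_le_iff[OF \<open>eps \<ge> 0\<close>]
    by (auto simp: orderings_eq_permuted_lists meas_F_eq_permuted_lists A_def \<open>length r = k\<close>)
  have N0: "\<P>(\<omega> in visible_pp lam dv. N0 \<omega> = k) = m ^ k / fact k * exp (- m)"
    unfolding m_def using assms(1,2) by (rule prob_N0_eq_poisson)
  have "0 < m"
    unfolding m_def using assms(1,2) by simp
  then show ?thesis
    unfolding event cond_prob_def N0 by simp
qed

end
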